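(* Under exactly the hypotheses of the preceding theorem (constants $c\in(0,1)$, $C\ge1$ with $|K^{(n)}_w(i)|\le C\binom nw(1-\frac{2w}{n})^i$ for all $n\ge1$, $0\le w\le cn$, $0\le i\le n/2$; a binary linear $[n,k]$ code $\mathcal{C}$ with $1\le k\le n-1$, generator matrix $G$ of rank $k$, dual distance $d^\perp$, $t^\perp=\lfloor (d^\perp-1)/2\rfloor$; an integer $0\le w\le cn$; $\varepsilon>0$; and a random vector $Z$ on $\mathbb{F}_2^n$ with $d_{TV}(P_{GZ},P_{U_k})\le\varepsilon$), the average absolute bias over all vectors of weight $w$ satisfies $$\frac{1}{\binom nw}\sum_{e\in\mathbb{F}_2^n:|e|=w}|\mathrm{bias}(e^\intercal Z)|\le\sqrt{\frac{|\mathcal{C}^\perp|V_n(t^\perp)}{2^{n+1}}}+\frac{\sqrt{Cn}}{2}\left(1-\frac{2w}{n}\right)^{t^\perp/2}+\sqrt{\frac\varepsilon2}.$$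
   Context: Krawtchouk polynomial: $K^{(n)}_w(i)=\sum_{j=0}^w(-1)^j\binom ij\binom{n-i}{w-j}$. Dual distance $d^\perp$: minimum Hamming weight of a nonzero vector of $\mathcal{C}^\perp$. $V_n(t)=\sum_{j=0}^t\binom nj$. For a $\{0,1\}$-valued random variable $\xi$, $\mathrm{bias}(\xi)=\frac12-\Pr(\xi=1)$. $P_{U_k}$ is uniform on $\mathbb{F}_2^k$; $d_{TV}(P,Q)=\frac12\sum_x|P(x)-Q(x)|$. *)

theory Defs
  imports "HOL-Probability.Probability"
begin

text \<open>Vectors of F_2^n are modelled as functions nat => bool that vanish
  (are False) outside {0..<n}; True stands for 1.\<close>

definition vecs :: "nat \<Rightarrow> (nat \<Rightarrow> bool) set" where
  "vecs n = {v. \<forall>i. n \<le> i \<longrightarrow> \<not> v i}"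

definition hweight :: "nat \<Rightarrow> (nat \<Rightarrow> bool) \<Rightarrow> nat" where
  "hweight n v = card {i. i < n \<and> v i}"

definition ip :: "nat \<Rightarrow> (nat \<Rightarrow> bool) \<Rightarrow> (nat \<Rightarrow> bool) \<Rightarrow> bool" where
  "ip n x y = odd (card {i. i < n \<and> x i \<and> y i})"

text \<open>A k x n matrix over F_2 is G :: nat => nat => bool, entry (j,i) = G j i.
  Matrix-vector product G z (in F_2^k) and row combination x^T G (in F_2^n).\<close>
definition mulvec :: "nat \<Rightarrow> nat \<Rightarrow> (nat \<Rightarrow> nat \<Rightarrow> bool) \<Rightarrow> (nat \<Rightarrow> bool) \<Rightarrow> (nat \<Rightarrow> bool)" where
  "mulvec k n G z = (\<lambda>j. j < k \<and> odd (card {i. i < n \<and> G j i \<and> z i}))"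

definition vecmul :: "nat \<Rightarrow> nat \<Rightarrow> (nat \<Rightarrow> bool) \<Rightarrow> (nat \<Rightarrow> nat \<Rightarrow> bool) \<Rightarrow> (nat \<Rightarrow> bool)" where
  "vecmul k n x G = (\<lambda>i. i < n \<and> odd (card {j. j < k \<and> x j \<and> G j i}))"

definition rank_k :: "nat \<Rightarrow> nat \<Rightarrow> (nat \<Rightarrow> nat \<Rightarrow> bool) \<Rightarrow> bool" where
  "rank_k k n G = (\<forall>x\<in>vecs k. vecmul k n x G = (\<lambda>_. False) \<longrightarrow> x = (\<lambda>_. False))"

definition gen_code :: "nat \<Rightarrow> nat \<Rightarrow> (nat \<Rightarrow> nat \<Rightarrow> bool) \<Rightarrow> (nat \<Rightarrow> bool) set" where
  "gen_code k n G = (\<lambda>x. vecmul k n x G) ` vecs k"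

definition dual_code :: "nat \<Rightarrow> (nat \<Rightarrow> bool) set \<Rightarrow> (nat \<Rightarrow> bool) set" where
  "dual_code n Cd = {y \<in> vecs n. \<forall>c\<in>Cd. \<not> ip n c y}"

definition min_dist :: "nat \<Rightarrow> (nat \<Rightarrow> bool) set \<Rightarrow> nat" where
  "min_dist n Cd = Min (hweight n ` (Cd - {\<lambda>_. False}))"

definition krawtchouk :: "nat \<Rightarrow> nat \<Rightarrow> nat \<Rightarrow> int" where
  "krawtchouk n w i = (\<Sum>j=0..w. (-1)^j * int (i choose j) * int ((n - i) choose (w - j)))"

definition hamming_ball_vol :: "nat \<Rightarrow> nat \<Rightarrow> nat" where
  "hamming_ball_vol n t = (\<Sum>j=0..t. n choose j)"

definition bias :: "(nat \<Rightarrow> bool) pmf \<Rightarrow> ((nat \<Rightarrow> bool) \<Rightarrow> bool) \<Rightarrow> real" where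
  "bias Z f = 1/2 - measure_pmf.prob Z {z. f z}"

definition tv_uniform :: "nat \<Rightarrow> (nat \<Rightarrow> bool) pmf \<Rightarrow> real" where
  "tv_uniform k P = (1/2) * (\<Sum>x\<in>vecs k. \<bar>pmf P x - 1 / 2^k\<bar>)"

end

theory Submission
  imports Defs
begin

text \<open>Since bias(e.Z) = E[(-1)^(e.Z)]/2, the sum of the squared biases over the sphere of
  weight w expands into (1/4) sum_z P(z) sum_y P(z+y) S(y), where S(y), the sum of the characters
  (-1)^(e.y) over that sphere, is +-K_w(min(|y|, n-|y|)). For t <= |y| <= n-t the Krawtchouk
  hypothesis makes |S(y)| exponentially small in t; the remaining y form a set U of at most
  2 V_n(t) vectors, and P(Z in z+U) <= P(GZ in G(z+U)) <= |U|/2^k + 2 eps because GZ is eps-close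
  to uniform. Cauchy-Schwarz and |C^perp| >= 2^(n-k), valid for every G, finish the proof. The
  estimate holds for every radius t.\<close>

definition parity :: "nat \<Rightarrow> (nat \<Rightarrow> bool) \<Rightarrow> bool" where
  "parity n P = odd (card {i. i < n \<and> P i})"

lemma parity_0 [simp]: "parity 0 P = False"
  by (simp add: parity_def)

lemma parity_Suc [simp]: "parity (Suc n) P = (parity n P \<noteq> P n)"
proof -
  have "{i. i < Suc n \<and> P i} = {i. i < n \<and> P i} \<union> (if P n then {n} else {})"
    by (auto simp: less_Suc_eq)
  then show ?thesis
    by (auto simp: parity_def)
qed

lemma parity_False [simp]: "parity n (\<lambda>_. False) = False"
  by (simp add: parity_def)

lemma parity_xor: "parity n (\<lambda>i. P i \<noteq> Q i) = (parity n P \<noteq> parity n Q)"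
  by (induction n) auto

lemma parity_conj_const: "parity n (\<lambda>i. P i \<and> b) = (b \<and> parity n P)"
  by (cases b) (auto simp: parity_def)

lemma parity_cong: "(\<And>i. i < n \<Longrightarrow> P i = Q i) \<Longrightarrow> parity n P = parity n Q"
  unfolding parity_def by (metis (mono_tags, lifting) Collect_cong)

lemma parity_swap:
  "parity n (\<lambda>i. y i \<and> parity k (\<lambda>j. A j i)) = parity k (\<lambda>j. parity n (\<lambda>i. A j i \<and> y i))"
proof (induction n)
  case (Suc n)
  have "parity k (\<lambda>j. parity (Suc n) (\<lambda>i. A j i \<and> y i))
      = (parity k (\<lambda>j. parity n (\<lambda>i. A j i \<and> y i)) \<noteq> parity k (\<lambda>j. A j n \<and> y n))"
    by (simp only: parity_Suc parity_xor)
  then show ?case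
    using Suc by (simp add: parity_conj_const)
qed simp

lemma ip_eq_parity: "ip n x y = parity n (\<lambda>i. x i \<and> y i)"
  by (simp add: ip_def parity_def)

lemma ip_vecmul_eq_ip_mulvec: "ip n (vecmul k n x G) y = ip k x (mulvec k n G y)"
proof -
  have "ip n (vecmul k n x G) y = parity n (\<lambda>i. y i \<and> parity k (\<lambda>j. x j \<and> G j i))"
    unfolding ip_eq_parity vecmul_def parity_def[symmetric] by (rule parity_cong) auto
  also have "\<dots> = parity k (\<lambda>j. parity n (\<lambda>i. (x j \<and> G j i) \<and> y i))"
    by (rule parity_swap)
  also have "\<dots> = ip k x (mulvec k n G y)"
    unfolding ip_eq_parity mulvec_def parity_def[symmetric]
    by (rule parity_cong) (simp add: parity_conj_const[symmetric] conj_ac)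
  finally show ?thesis .
qed

definition vxor :: "(nat \<Rightarrow> bool) \<Rightarrow> (nat \<Rightarrow> bool) \<Rightarrow> nat \<Rightarrow> bool" where
  "vxor u v = (\<lambda>i. u i \<noteq> v i)"

definition vcompl :: "nat \<Rightarrow> (nat \<Rightarrow> bool) \<Rightarrow> nat \<Rightarrow> bool" where
  "vcompl n v = (\<lambda>i. i < n \<and> \<not> v i)"

lemma vxor_vecs: "u \<in> vecs n \<Longrightarrow> v \<in> vecs n \<Longrightarrow> vxor u v \<in> vecs n"
  by (auto simp: vxor_def vecs_def)

lemma vxor_vxor [simp]: "vxor u (vxor u v) = v"
  by (auto simp: vxor_def)

lemma vxor_self [simp]: "vxor u u = (\<lambda>_. False)"
  by (simp add: vxor_def)

lemma vcompl_vecs: "vcompl n v \<in> vecs n"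
  by (auto simp: vcompl_def vecs_def)

lemma vcompl_vcompl: "v \<in> vecs n \<Longrightarrow> vcompl n (vcompl n v) = v"
  by (auto simp: vcompl_def vecs_def fun_eq_iff) (meson not_le)

lemma mulvec_vecs: "mulvec k n G y \<in> vecs k"
  by (auto simp: mulvec_def vecs_def)

lemma mulvec_vxor: "mulvec k n G (vxor u v) = vxor (mulvec k n G u) (mulvec k n G v)"
proof -
  have "parity n (\<lambda>i. G j i \<and> vxor u v i) = (parity n (\<lambda>i. G j i \<and> u i) \<noteq> parity n (\<lambda>i. G j i \<and> v i))"
    for j
    by (subst parity_xor[symmetric], rule parity_cong) (auto simp: vxor_def)
  then show ?thesis
    by (auto simp: mulvec_def vxor_def parity_def fun_eq_iff)
qed

lemma sum_vecs_vxor: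
  "u \<in> vecs n \<Longrightarrow> (\<Sum>v\<in>vecs n. f (vxor u v)) = (\<Sum>v\<in>vecs n. f v :: real)"
  by (rule sum.reindex_bij_witness[where i="vxor u" and j="vxor u"]) (auto simp: vxor_vecs)

definition vec_of_set :: "nat set \<Rightarrow> nat \<Rightarrow> bool" where
  "vec_of_set S = (\<lambda>i. i \<in> S)"

definition set_of_vec :: "nat \<Rightarrow> (nat \<Rightarrow> bool) \<Rightarrow> nat set" where
  "set_of_vec n v = {i. i < n \<and> v i}"

lemma set_of_vec_subset: "set_of_vec n v \<subseteq> {..<n}"
  by (auto simp: set_of_vec_def)

lemma vec_of_set_of_vec: "v \<in> vecs n \<Longrightarrow> vec_of_set (set_of_vec n v) = v"
  by (auto simp: set_of_vec_def vec_of_set_def vecs_def fun_eq_iff) (meson not_le)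

lemma inj_vec_of_set: "inj_on vec_of_set A"
  by (auto simp: inj_on_def vec_of_set_def fun_eq_iff)

lemma hweight_eq_card_set_of_vec: "hweight n v = card (set_of_vec n v)"
  by (simp add: hweight_def set_of_vec_def)

lemma bij_betw_vec_of_set: "bij_betw vec_of_set (Pow {..<n}) (vecs n)"
proof (rule bij_betwI[where g = "set_of_vec n"])
  show "\<And>y. y \<in> vecs n \<Longrightarrow> vec_of_set (set_of_vec n y) = y"
    by (rule vec_of_set_of_vec)
qed (auto simp: vec_of_set_def set_of_vec_def vecs_def)

lemma finite_vecs [simp]: "finite (vecs n)"
  using bij_betw_finite[OF bij_betw_vec_of_set] by auto

lemma card_vecs: "card (vecs n) = 2 ^ n"
  using bij_betw_same_card[OF bij_betw_vec_of_set, of n] by (simp add: card_Pow)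

lemma hweight_vcompl: "hweight n (vcompl n v) = n - hweight n v"
proof -
  have "set_of_vec n (vcompl n v) = {..<n} - set_of_vec n v"
    by (auto simp: set_of_vec_def vcompl_def)
  then show ?thesis
    by (simp add: hweight_eq_card_set_of_vec card_Diff_subset set_of_vec_subset
        finite_subset[OF set_of_vec_subset])
qed

definition hamming_sphere :: "nat \<Rightarrow> nat \<Rightarrow> (nat \<Rightarrow> bool) set" where
  "hamming_sphere n w = {e \<in> vecs n. hweight n e = w}"

lemma hamming_sphere_eq_image:
  "hamming_sphere n w = vec_of_set ` {S. S \<subseteq> {..<n} \<and> card S = w}"
proof
  show "vec_of_set ` {S. S \<subseteq> {..<n} \<and> card S = w} \<subseteq> hamming_sphere n w"
  proof
    fix v assume "v \<in> vec_of_set ` {S. S \<subseteq> {..<n} \<and> card S = w}"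
    then obtain S where S: "S \<subseteq> {..<n}" "card S = w" "v = vec_of_set S"
      by blast
    then have "set_of_vec n v = S"
      by (auto simp: set_of_vec_def vec_of_set_def)
    then show "v \<in> hamming_sphere n w"
      using S by (auto simp: hamming_sphere_def hweight_eq_card_set_of_vec vecs_def vec_of_set_def)
  qed
  show "hamming_sphere n w \<subseteq> vec_of_set ` {S. S \<subseteq> {..<n} \<and> card S = w}"
  proof
    fix v assume v: "v \<in> hamming_sphere n w"
    then have "v = vec_of_set (set_of_vec n v)"
      by (simp add: hamming_sphere_def vec_of_set_of_vec)
    moreover have "set_of_vec n v \<in> {S. S \<subseteq> {..<n} \<and> card S = w}"
      using v set_of_vec_subset by (auto simp: hamming_sphere_def hweight_eq_card_set_of_vec)
    ultimately show "v \<in> vec_of_set ` {S. S \<subseteq> {..<n} \<and> card S = w}"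
      by blast
  qed
qed

lemma card_hamming_sphere: "card (hamming_sphere n w) = n choose w"
proof -
  have "card (hamming_sphere n w) = card {S. S \<subseteq> {..<n} \<and> card S = w}"
    unfolding hamming_sphere_eq_image by (rule card_image[OF inj_vec_of_set])
  also have "\<dots> = n choose w"
    using n_subsets[of "{..<n}" w] by simp
  finally show ?thesis .
qed

lemma card_hamming_ball: "card {v \<in> vecs n. hweight n v \<le> t} = hamming_ball_vol n t"
proof -
  have "card {v \<in> vecs n. hweight n v \<le> t} = (\<Sum>j=0..t. card (hamming_sphere n j))"
    by (subst card_UN_disjoint[symmetric])
       (auto simp: hamming_sphere_def intro!: arg_cong[where f=card])
  then show ?thesis
    by (simp add: card_hamming_sphere hamming_ball_vol_def)
qed

lemma card_ball_union_coball_le: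
  "card {v \<in> vecs n. hweight n v \<le> t \<or> n - hweight n v \<le> t} \<le> 2 * hamming_ball_vol n t"
proof -
  let ?ball = "{v \<in> vecs n. hweight n v \<le> t}" and ?coball = "{v \<in> vecs n. n - hweight n v \<le> t}"
  have "?coball \<subseteq> vcompl n ` ?ball"
    by (auto simp: vcompl_vecs hweight_vcompl vcompl_vcompl intro!: image_eqI[where x="vcompl n _"])
  then have "card ?coball \<le> card (vcompl n ` ?ball)"
    by (intro card_mono) auto
  also have "\<dots> \<le> card ?ball"
    by (intro card_image_le) auto
  finally have "card (?ball \<union> ?coball) \<le> 2 * card ?ball"
    using card_Un_le[of ?ball ?coball] by linarith
  moreover have "{v \<in> vecs n. hweight n v \<le> t \<or> n - hweight n v \<le> t} = ?ball \<union> ?coball"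
    by auto
  ultimately show ?thesis
    by (simp add: card_hamming_ball)
qed

section \<open>Walsh characters and Krawtchouk values\<close>

lemma card_subsets_by_intersection:
  assumes A: "finite A" and Y: "Y \<subseteq> A" and j: "j \<le> w"
  shows "card {S. S \<subseteq> A \<and> card S = w \<and> card (S \<inter> Y) = j}
         = (card Y choose j) * ((card A - card Y) choose (w - j))"
proof -
  let ?L = "{S. S \<subseteq> A \<and> card S = w \<and> card (S \<inter> Y) = j}"
  let ?I = "{I. I \<subseteq> Y \<and> card I = j}" and ?O = "{J. J \<subseteq> A - Y \<and> card J = w - j}"
  have fY: "finite Y"
    using A Y finite_subset by blast
  have "bij_betw (\<lambda>S. (S \<inter> Y, S - Y)) ?L (?I \<times> ?O)"
  proof (rule bij_betwI[where g = "\<lambda>(I, J). I \<union> J"])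
    show "(\<lambda>S. (S \<inter> Y, S - Y)) \<in> ?L \<rightarrow> ?I \<times> ?O"
    proof
      fix S assume S: "S \<in> ?L"
      then have "card S = card (S \<inter> Y) + card (S - Y)"
        using A finite_subset by (intro card_Int_Diff) blast
      then show "(S \<inter> Y, S - Y) \<in> ?I \<times> ?O"
        using S by auto
    qed
    show "(\<lambda>(I, J). I \<union> J) \<in> ?I \<times> ?O \<rightarrow> ?L"
    proof
      fix p assume "p \<in> ?I \<times> ?O"
      then obtain I J where p: "p = (I, J)" and I: "I \<subseteq> Y" "card I = j"
        and J: "J \<subseteq> A - Y" "card J = w - j"
        by blast
      have "card (I \<union> J) = card I + card J"
        using I J fY A by (intro card_Un_disjoint) (auto intro: finite_subset)
      moreover have "(I \<union> J) \<inter> Y = I"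
        using I J by auto
      ultimately show "(case p of (I, J) \<Rightarrow> I \<union> J) \<in> ?L"
        using p I J Y j by auto
    qed
  qed auto
  then have "card ?L = card ?I * card ?O"
    by (simp add: bij_betw_same_card card_cartesian_product)
  also have "\<dots> = (card Y choose j) * (card (A - Y) choose (w - j))"
    using A fY by (simp add: n_subsets)
  finally show ?thesis
    using Y fY by (simp add: card_Diff_subset)
qed

definition walsh :: "nat \<Rightarrow> (nat \<Rightarrow> bool) \<Rightarrow> (nat \<Rightarrow> bool) \<Rightarrow> real" where
  "walsh n e y = (if ip n e y then -1 else 1)"

lemma abs_walsh [simp]: "\<bar>walsh n e y\<bar> = 1"
  by (simp add: walsh_def)

lemma walsh_eq_power: "walsh n e y = (-1) ^ card {i. i < n \<and> e i \<and> y i}"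
  by (simp add: walsh_def ip_def minus_one_power_iff)

lemma walsh_vxor: "walsh n e (vxor u v) = walsh n e u * walsh n e v"
proof -
  have "ip n e (vxor u v) = parity n (\<lambda>i. (e i \<and> u i) \<noteq> (e i \<and> v i))"
    unfolding ip_eq_parity by (rule parity_cong) (auto simp: vxor_def)
  also have "\<dots> = (ip n e u \<noteq> ip n e v)"
    by (simp only: parity_xor ip_eq_parity)
  finally show ?thesis
    by (simp add: walsh_def)
qed

lemma walsh_vcompl:
  assumes "hweight n e = w"
  shows "walsh n e (vcompl n v) = (-1) ^ w * walsh n e v"
proof -
  have "ip n e (vcompl n v) = parity n (\<lambda>i. e i \<noteq> (e i \<and> v i))"
    unfolding ip_eq_parity by (rule parity_cong) (auto simp: vcompl_def)
  also have "\<dots> = (parity n e \<noteq> ip n e v)"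
    by (simp only: parity_xor ip_eq_parity)
  also have "parity n e = odd w"
    using assms by (simp add: parity_def hweight_def)
  finally show ?thesis
    by (simp add: walsh_def minus_one_power_iff)
qed

definition walsh_sphere_sum :: "nat \<Rightarrow> nat \<Rightarrow> (nat \<Rightarrow> bool) \<Rightarrow> real" where
  "walsh_sphere_sum n w y = (\<Sum>e\<in>hamming_sphere n w. walsh n e y)"

lemma abs_walsh_sphere_sum_le: "\<bar>walsh_sphere_sum n w y\<bar> \<le> real (n choose w)"
  using sum_abs[of "\<lambda>e. walsh n e y" "hamming_sphere n w"]
  by (simp add: walsh_sphere_sum_def card_hamming_sphere)

lemma walsh_sphere_sum_vcompl: "walsh_sphere_sum n w (vcompl n y) = (-1) ^ w * walsh_sphere_sum n w y"
  unfolding walsh_sphere_sum_def sum_distrib_left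
  by (rule sum.cong) (auto simp: walsh_vcompl hamming_sphere_def)

lemma walsh_sphere_sum_eq_krawtchouk:
  assumes y: "y \<in> vecs n"
  shows "walsh_sphere_sum n w y = krawtchouk n w (hweight n y)"
proof -
  define Y where "Y = set_of_vec n y"
  define SW where "SW = {S. S \<subseteq> {..<n} \<and> card S = w}"
  have Y: "Y \<subseteq> {..<n}"
    unfolding Y_def by (rule set_of_vec_subset)
  have "walsh_sphere_sum n w y = (\<Sum>S\<in>SW. (-1) ^ card (S \<inter> Y))"
    unfolding walsh_sphere_sum_def hamming_sphere_eq_image SW_def
    by (subst sum.reindex[OF inj_vec_of_set])
       (auto simp: walsh_eq_power Y_def vec_of_set_def set_of_vec_def
        intro!: sum.cong arg_cong[where f="\<lambda>m. (-1) ^ card m"])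
  also have "\<dots> = (\<Sum>j=0..w. \<Sum>S\<in>{S \<in> SW. card (S \<inter> Y) = j}. (-1) ^ card (S \<inter> Y))"
  proof (rule sum.group[symmetric])
    show "finite SW"
      unfolding SW_def by (rule finite_subset[of _ "Pow {..<n}"]) auto
    have "card (S \<inter> Y) \<le> w" if "S \<in> SW" for S
    proof -
      have "finite S" "card S = w"
        using that finite_subset by (auto simp: SW_def)
      then show ?thesis
        using card_mono[of S "S \<inter> Y"] by simp
    qed
    then show "(\<lambda>S. card (S \<inter> Y)) ` SW \<subseteq> {0..w}"
      by auto
  qed simp
  also have "\<dots> = (\<Sum>j=0..w. (-1) ^ j * real (card {S \<in> SW. card (S \<inter> Y) = j}))"
    by (intro sum.cong) simp_all
  also have "\<dots> = (\<Sum>j=0..w. (-1) ^ j * (real (card Y choose j) * real ((n - card Y) choose (w - j))))"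
    using card_subsets_by_intersection[of "{..<n}" Y] Y
    by (intro sum.cong) (simp_all add: SW_def conj_assoc)
  also have "\<dots> = krawtchouk n w (hweight n y)"
    by (simp add: krawtchouk_def hweight_eq_card_set_of_vec Y_def mult.assoc)
  finally show ?thesis .
qed

lemma abs_walsh_sphere_sum_le_krawtchouk_bound:
  fixes CC :: real
  assumes kraw: "\<And>i. 2 * i \<le> n \<Longrightarrow>
       \<bar>real_of_int (krawtchouk n w i)\<bar> \<le> CC * real (n choose w) * (1 - 2 * real w / real n) ^ i"
    and w: "w \<le> n" and CC: "CC \<ge> 0"
    and y: "y \<in> vecs n" and t: "t \<le> hweight n y" "t \<le> n - hweight n y"
  shows "\<bar>walsh_sphere_sum n w y\<bar> \<le> CC * real (n choose w) * \<bar>1 - 2 * real w / real n\<bar> ^ t"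
proof -
  define x where "x = 1 - 2 * real w / real n"
  have "\<bar>x\<bar> \<le> 1"
    using w by (cases "n = 0") (auto simp: x_def abs_le_iff field_simps)
  then have kraw_t: "\<bar>real_of_int (krawtchouk n w i)\<bar> \<le> CC * real (n choose w) * \<bar>x\<bar> ^ t"
    if "2 * i \<le> n" "t \<le> i" for i
  proof -
    have "x ^ i \<le> \<bar>x\<bar> ^ i"
      by (metis abs_ge_self power_abs)
    also have "\<dots> \<le> \<bar>x\<bar> ^ t"
      using \<open>\<bar>x\<bar> \<le> 1\<close> that(2) by (simp add: power_decreasing)
    finally have "CC * real (n choose w) * x ^ i \<le> CC * real (n choose w) * \<bar>x\<bar> ^ t"
      using CC by (simp add: mult_left_mono)
    then show ?thesis
      using kraw[OF that(1)] unfolding x_def by linarith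
  qed
  show ?thesis
  proof (cases "2 * hweight n y \<le> n")
    case True
    then show ?thesis
      using kraw_t[OF True t(1)] by (simp add: walsh_sphere_sum_eq_krawtchouk[OF y] x_def)
  next
    case False
    have "\<bar>walsh_sphere_sum n w y\<bar> = \<bar>walsh_sphere_sum n w (vcompl n y)\<bar>"
      by (simp add: walsh_sphere_sum_vcompl abs_mult)
    also have "\<dots> = \<bar>real_of_int (krawtchouk n w (n - hweight n y))\<bar>"
      by (simp add: walsh_sphere_sum_eq_krawtchouk vcompl_vecs hweight_vcompl)
    also have "\<dots> \<le> CC * real (n choose w) * \<bar>x\<bar> ^ t"
      using False t by (intro kraw_t) auto
    finally show ?thesis
      unfolding x_def .
  qed
qed

section \<open>The second moment of the bias\<close>

lemma bias_ip_eq_walsh_transform: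
  assumes Z: "set_pmf Z \<subseteq> vecs n"
  shows "bias Z (ip n e) = (\<Sum>z\<in>vecs n. pmf Z z * walsh n e z) / 2"
proof -
  have "{z. ip n e z} \<inter> set_pmf Z = ({z. ip n e z} \<inter> vecs n) \<inter> set_pmf Z"
    using Z by auto
  then have "measure_pmf.prob Z {z. ip n e z} = measure_pmf.prob Z ({z. ip n e z} \<inter> vecs n)"
    by (metis measure_Int_set_pmf)
  also have "\<dots> = (\<Sum>z\<in>vecs n. if ip n e z then pmf Z z else 0)"
    by (simp add: measure_measure_pmf_finite sum.inter_restrict Int_commute)
  finally have "measure_pmf.prob Z {z. ip n e z} = (\<Sum>z\<in>vecs n. if ip n e z then pmf Z z else 0)" .
  moreover have "(\<Sum>z\<in>vecs n. pmf Z z * walsh n e z)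
      = (\<Sum>z\<in>vecs n. pmf Z z - 2 * (if ip n e z then pmf Z z else 0))"
    by (rule sum.cong) (auto simp: walsh_def)
  then have "(\<Sum>z\<in>vecs n. pmf Z z * walsh n e z)
      = (\<Sum>z\<in>vecs n. pmf Z z) - 2 * (\<Sum>z\<in>vecs n. if ip n e z then pmf Z z else 0)"
    by (simp add: sum_subtractf sum_distrib_left)
  moreover have "(\<Sum>z\<in>vecs n. pmf Z z) = 1"
    using Z by (simp add: sum_pmf_eq_1)
  ultimately show ?thesis
    by (simp add: bias_def)
qed

lemma sum_hamming_sphere_walsh_transform_square:
  fixes f :: "(nat \<Rightarrow> bool) \<Rightarrow> real"
  shows "(\<Sum>e\<in>hamming_sphere n w. (\<Sum>z\<in>vecs n. f z * walsh n e z)\<^sup>2)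
        = (\<Sum>z\<in>vecs n. f z * (\<Sum>y\<in>vecs n. f (vxor z y) * walsh_sphere_sum n w y))"
proof -
  let ?E = "hamming_sphere n w" and ?V = "vecs n"
  have "(\<Sum>e\<in>?E. (\<Sum>z\<in>?V. f z * walsh n e z)\<^sup>2)
      = (\<Sum>e\<in>?E. \<Sum>z\<in>?V. \<Sum>z'\<in>?V. f z * f z' * walsh n e (vxor z z'))"
    by (simp add: power2_eq_square sum_product walsh_vxor mult_ac)
  also have "\<dots> = (\<Sum>z\<in>?V. f z * (\<Sum>z'\<in>?V. f z' * walsh_sphere_sum n w (vxor z z')))"
    by (simp add: sum.swap[of _ ?E] walsh_sphere_sum_def sum_distrib_left mult_ac)
  also have "\<dots> = (\<Sum>z\<in>?V. f z * (\<Sum>y\<in>?V. f (vxor z y) * walsh_sphere_sum n w y))"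
  proof (rule sum.cong[OF refl])
    fix z assume "z \<in> ?V"
    from sum_vecs_vxor[OF this, of "\<lambda>z'. f z' * walsh_sphere_sum n w (vxor z z')"]
    show "f z * (\<Sum>z'\<in>?V. f z' * walsh_sphere_sum n w (vxor z z'))
        = f z * (\<Sum>y\<in>?V. f (vxor z y) * walsh_sphere_sum n w y)"
      by simp
  qed
  finally show ?thesis .
qed

section \<open>Closeness to uniform and the size of the dual code\<close>

lemma prob_le_card_div_plus_tv_uniform:
  assumes W: "finite W" and h: "h ` W \<subseteq> vecs k"
  shows "measure_pmf.prob Z W \<le> real (card W) / 2 ^ k + 2 * tv_uniform k (map_pmf h Z)"
proof -
  let ?g = "pmf (map_pmf h Z)"
  have "measure_pmf.prob Z W \<le> measure_pmf.prob Z (h -` (h ` W))"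
    by (rule measure_pmf.finite_measure_mono) auto
  also have "\<dots> = measure_pmf.prob (map_pmf h Z) (h ` W)"
    by (rule measure_map_pmf[symmetric])
  also have "\<dots> = (\<Sum>s\<in>h ` W. ?g s)"
    using W by (intro measure_measure_pmf_finite finite_imageI)
  also have "\<dots> \<le> (\<Sum>s\<in>h ` W. 1 / 2 ^ k + \<bar>?g s - 1 / 2 ^ k\<bar>)"
    by (rule sum_mono) linarith
  also have "\<dots> = real (card (h ` W)) / 2 ^ k + (\<Sum>s\<in>h ` W. \<bar>?g s - 1 / 2 ^ k\<bar>)"
    by (simp add: sum.distrib)
  also have "\<dots> \<le> real (card W) / 2 ^ k + (\<Sum>s\<in>vecs k. \<bar>?g s - 1 / 2 ^ k\<bar>)"
  proof (rule add_mono)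
    show "real (card (h ` W)) / 2 ^ k \<le> real (card W) / 2 ^ k"
      using card_image_le[OF W, of h] by (simp add: divide_right_mono)
    show "(\<Sum>s\<in>h ` W. \<bar>?g s - 1 / 2 ^ k\<bar>) \<le> (\<Sum>s\<in>vecs k. \<bar>?g s - 1 / 2 ^ k\<bar>)"
      using h by (intro sum_mono2) auto
  qed
  finally show ?thesis
    by (simp add: tv_uniform_def)
qed

lemma kernel_mulvec_subset_dual_code:
  "{y \<in> vecs n. mulvec k n G y = (\<lambda>_. False)} \<subseteq> dual_code n (gen_code k n G)"
proof
  fix y assume y: "y \<in> {y \<in> vecs n. mulvec k n G y = (\<lambda>_. False)}"
  have "\<not> ip n c y" if codeword: "c \<in> gen_code k n G" for c
  proof -
    obtain x where "c = vecmul k n x G"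
      using codeword unfolding gen_code_def by blast
    then have "ip n c y = ip k x (\<lambda>_. False)"
      using y by (simp add: ip_vecmul_eq_ip_mulvec)
    then show ?thesis
      by (simp add: ip_eq_parity)
  qed
  then show "y \<in> dual_code n (gen_code k n G)"
    using y by (simp add: dual_code_def)
qed

lemma two_pow_le_card_kernel_mulvec:
  "2 ^ n \<le> card {y \<in> vecs n. mulvec k n G y = (\<lambda>_. False)} * 2 ^ k"
proof -
  let ?V = "vecs n" and ?h = "mulvec k n G"
  let ?K = "{y \<in> ?V. ?h y = (\<lambda>_. False)}"
  have fibre: "card {v \<in> ?V. ?h v = s} \<le> card ?K" if "s \<in> ?h ` ?V" for s
  proof -
    obtain v0 where v0: "v0 \<in> ?V" "?h v0 = s"
      using \<open>s \<in> ?h ` ?V\<close> by blast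
    have "vxor v0 ` {v \<in> ?V. ?h v = s} \<subseteq> ?K"
      using v0 by (auto simp: mulvec_vxor vxor_vecs)
    then have "card (vxor v0 ` {v \<in> ?V. ?h v = s}) \<le> card ?K"
      by (intro card_mono) auto
    moreover have "inj_on (vxor v0) {v \<in> ?V. ?h v = s}"
      by (rule inj_on_inverseI[where g="vxor v0"]) simp
    ultimately show ?thesis
      by (simp add: card_image)
  qed
  have "2 ^ n = (\<Sum>v\<in>?V. 1::nat)"
    by (simp add: card_vecs)
  also have "\<dots> = (\<Sum>s\<in>?h ` ?V. \<Sum>v\<in>{v \<in> ?V. ?h v = s}. 1)"
    by (rule sum.group[symmetric]) auto
  also have "\<dots> \<le> (\<Sum>s\<in>?h ` ?V. card ?K)"
    using fibre by (intro sum_mono) simp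
  also have "\<dots> = card (?h ` ?V) * card ?K"
    by simp
  also have "\<dots> \<le> card (vecs k) * card ?K"
    by (intro mult_le_mono1 card_mono) (auto simp: mulvec_vecs)
  finally show ?thesis
    by (simp add: card_vecs mult.commute)
qed

lemma two_pow_le_card_dual_code: "2 ^ n \<le> card (dual_code n (gen_code k n G)) * 2 ^ k"
proof -
  have "finite (dual_code n (gen_code k n G))"
    by (rule finite_subset[of _ "vecs n"]) (auto simp: dual_code_def)
  then have "card {y \<in> vecs n. mulvec k n G y = (\<lambda>_. False)} \<le> card (dual_code n (gen_code k n G))"
    by (rule card_mono[OF _ kernel_mulvec_subset_dual_code])
  then have "card {y \<in> vecs n. mulvec k n G y = (\<lambda>_. False)} * 2 ^ k
      \<le> card (dual_code n (gen_code k n G)) * 2 ^ k"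
    by (rule mult_le_mono1)
  with two_pow_le_card_kernel_mulvec show ?thesis
    by (rule order_trans)
qed

lemma sum_pmf_vxor_walsh_sphere_sum_le:
  fixes D :: real
  assumes Z: "set_pmf Z \<subseteq> vecs n" and z: "z \<in> vecs n" and D: "D \<ge> 0"
    and small: "\<And>y. y \<in> vecs n \<Longrightarrow> t \<le> hweight n y \<Longrightarrow> t \<le> n - hweight n y \<Longrightarrow>
      \<bar>walsh_sphere_sum n w y\<bar> \<le> D"
  shows "(\<Sum>y\<in>vecs n. pmf Z (vxor z y) * walsh_sphere_sum n w y)
     \<le> real (n choose w) * (2 * real (hamming_ball_vol n t) / 2 ^ k
         + 2 * tv_uniform k (map_pmf (mulvec k n G) Z)) + D"
proof -
  let ?B = "real (n choose w)" and ?p = "\<lambda>y. pmf Z (vxor z y)"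
  let ?P = "\<lambda>y. hweight n y \<le> t \<or> n - hweight n y \<le> t"
  let ?U = "{y \<in> vecs n. ?P y}"
  have "?p y * walsh_sphere_sum n w y \<le> ?B * (if ?P y then ?p y else 0) + D * ?p y"
    if y: "y \<in> vecs n" for y
  proof (cases "?P y")
    case True
    have "?p y * walsh_sphere_sum n w y \<le> ?p y * ?B"
      using abs_walsh_sphere_sum_le[of n w y] by (intro mult_left_mono) auto
    moreover have "0 \<le> D * ?p y"
      using D by simp
    ultimately show ?thesis
      using True by (simp add: mult.commute)
  next
    case False
    then have "t \<le> hweight n y" "t \<le> n - hweight n y"
      by simp_all
    then have "\<bar>walsh_sphere_sum n w y\<bar> \<le> D"
      by (rule small[OF y])
    then have "walsh_sphere_sum n w y \<le> D"
      by simp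
    then have "?p y * walsh_sphere_sum n w y \<le> ?p y * D"
      by (rule mult_left_mono) simp
    then show ?thesis
      using False by (simp add: mult.commute)
  qed
  then have "(\<Sum>y\<in>vecs n. ?p y * walsh_sphere_sum n w y)
      \<le> (\<Sum>y\<in>vecs n. ?B * (if ?P y then ?p y else 0) + D * ?p y)"
    by (rule sum_mono)
  also have "\<dots> = ?B * (\<Sum>y\<in>?U. ?p y) + D * (\<Sum>y\<in>vecs n. ?p y)"
    by (simp add: sum.distrib sum_distrib_left[symmetric] sum.inter_filter)
  also have "(\<Sum>y\<in>vecs n. ?p y) = 1"
    using sum_vecs_vxor[OF z, of "pmf Z"] Z by (simp add: sum_pmf_eq_1)
  finally have "(\<Sum>y\<in>vecs n. ?p y * walsh_sphere_sum n w y) \<le> ?B * (\<Sum>y\<in>?U. ?p y) + D"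
    by simp
  moreover have "(\<Sum>y\<in>?U. ?p y)
      \<le> 2 * real (hamming_ball_vol n t) / 2 ^ k + 2 * tv_uniform k (map_pmf (mulvec k n G) Z)"
  proof -
    have "inj_on (vxor z) ?U"
      by (rule inj_on_inverseI[where g = "vxor z"]) simp
    then have "(\<Sum>y\<in>?U. ?p y) = measure_pmf.prob Z (vxor z ` ?U)"
      by (simp add: measure_measure_pmf_finite sum.reindex)
    also have "\<dots> \<le> real (card (vxor z ` ?U)) / 2 ^ k + 2 * tv_uniform k (map_pmf (mulvec k n G) Z)"
      by (rule prob_le_card_div_plus_tv_uniform) (auto simp: mulvec_vecs)
    also have "card (vxor z ` ?U) \<le> 2 * hamming_ball_vol n t"
      using card_image_le[of ?U "vxor z"] card_ball_union_coball_le[of n t] by simp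
    finally show ?thesis
      by (simp add: divide_right_mono)
  qed
  then have "?B * (\<Sum>y\<in>?U. ?p y)
      \<le> ?B * (2 * real (hamming_ball_vol n t) / 2 ^ k + 2 * tv_uniform k (map_pmf (mulvec k n G) Z))"
    by (rule mult_left_mono) simp
  ultimately show ?thesis
    by linarith
qed

lemma sum_bias_square_le:
  fixes D :: real
  assumes Z: "set_pmf Z \<subseteq> vecs n" and D: "D \<ge> 0"
    and small: "\<And>y. y \<in> vecs n \<Longrightarrow> t \<le> hweight n y \<Longrightarrow> t \<le> n - hweight n y \<Longrightarrow>
      \<bar>walsh_sphere_sum n w y\<bar> \<le> D"
  shows "(\<Sum>e\<in>hamming_sphere n w. (bias Z (ip n e))\<^sup>2)
     \<le> (real (n choose w) * (2 * real (hamming_ball_vol n t) / 2 ^ k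
         + 2 * tv_uniform k (map_pmf (mulvec k n G) Z)) + D) / 4"
proof -
  define M where "M = real (n choose w) * (2 * real (hamming_ball_vol n t) / 2 ^ k
    + 2 * tv_uniform k (map_pmf (mulvec k n G) Z)) + D"
  have "(\<Sum>e\<in>hamming_sphere n w. (\<Sum>z\<in>vecs n. pmf Z z * walsh n e z)\<^sup>2)
      = (\<Sum>z\<in>vecs n. pmf Z z * (\<Sum>y\<in>vecs n. pmf Z (vxor z y) * walsh_sphere_sum n w y))"
    by (rule sum_hamming_sphere_walsh_transform_square)
  also have "\<dots> \<le> (\<Sum>z\<in>vecs n. pmf Z z * M)"
    unfolding M_def
    by (intro sum_mono mult_left_mono sum_pmf_vxor_walsh_sphere_sum_le[OF Z _ D small]) simp_all
  also have "\<dots> = M"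
    using Z by (simp add: sum_distrib_right[symmetric] sum_pmf_eq_1)
  finally have "(\<Sum>e\<in>hamming_sphere n w. (\<Sum>z\<in>vecs n. pmf Z z * walsh n e z)\<^sup>2) \<le> M" .
  then show ?thesis
    by (simp add: bias_ip_eq_walsh_transform[OF Z] power_divide sum_divide_distrib[symmetric] M_def)
qed

lemma average_abs_le_sqrt_average_square:
  fixes f :: "'a \<Rightarrow> real"
  shows "(\<Sum>x\<in>A. \<bar>f x\<bar>) / card A \<le> sqrt ((\<Sum>x\<in>A. (f x)\<^sup>2) / card A)"
proof (cases "card A = 0")
  case False
  have "(\<Sum>x\<in>A. \<bar>f x\<bar> * 1)\<^sup>2 \<le> (\<Sum>x\<in>A. \<bar>f x\<bar>\<^sup>2) * (\<Sum>x\<in>A. 1\<^sup>2)"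
    by (rule Cauchy_Schwarz_ineq_sum)
  then have "((\<Sum>x\<in>A. \<bar>f x\<bar>) / card A)\<^sup>2 \<le> (\<Sum>x\<in>A. (f x)\<^sup>2) / card A"
    using False by (simp add: power_divide divide_le_eq power2_eq_square)
  then show ?thesis
    by (rule real_le_rsqrt)
qed simp

lemma sqrt_add3_le:
  fixes a b c :: real
  assumes "0 \<le> a" "0 \<le> b" "0 \<le> c"
  shows "sqrt (a + b + c) \<le> sqrt a + sqrt b + sqrt c"
proof -
  have "sqrt (a + b + c) \<le> sqrt (a + b) + sqrt c"
    using assms by (intro sqrt_add_le_add_sqrt) simp_all
  also have "sqrt (a + b) \<le> sqrt a + sqrt b"
    using assms by (intro sqrt_add_le_add_sqrt)
  finally show ?thesis
    by simp
qed

lemma tv_uniform_nonneg: "tv_uniform k P \<ge> 0"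
  by (simp add: tv_uniform_def sum_nonneg)

lemma ball_vol_div_two_pow_le:
  "real V / 2 ^ (k + 1) \<le> real (card (dual_code n (gen_code k n G))) * real V / 2 ^ (n + 1)"
proof -
  let ?d = "real (card (dual_code n (gen_code k n G)))"
  have "real (2 ^ n) \<le> real (card (dual_code n (gen_code k n G)) * 2 ^ k)"
    using two_pow_le_card_dual_code[of n k G] by (simp only: of_nat_le_iff)
  then have two_pow: "(2::real) ^ n \<le> ?d * 2 ^ k"
    by simp
  have "real V / 2 ^ (k + 1) = real V * 2 ^ n / (2 ^ (n + 1) * 2 ^ k)"
    by (simp add: power_add field_simps)
  also have "\<dots> \<le> real V * (?d * 2 ^ k) / (2 ^ (n + 1) * 2 ^ k)"
    using two_pow by (intro divide_right_mono mult_left_mono) auto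
  also have "\<dots> = ?d * real V / 2 ^ (n + 1)"
    by (simp add: field_simps)
  finally show ?thesis .
qed

lemma average_abs_bias_le:
  fixes CC :: real and t :: nat
  assumes kraw: "\<And>i. 2 * i \<le> n \<Longrightarrow>
       \<bar>real_of_int (krawtchouk n w i)\<bar> \<le> CC * real (n choose w) * (1 - 2 * real w / real n) ^ i"
    and w: "w \<le> n" and CC: "CC \<ge> 0" and Z: "set_pmf Z \<subseteq> vecs n"
  shows "(1 / real (n choose w)) * (\<Sum>e\<in>hamming_sphere n w. \<bar>bias Z (ip n e)\<bar>)
    \<le> sqrt (real (card (dual_code n (gen_code k n G))) * real (hamming_ball_vol n t) / 2 ^ (n + 1))
       + sqrt CC / 2 * sqrt (\<bar>1 - 2 * real w / real n\<bar> ^ t)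
       + sqrt (tv_uniform k (map_pmf (mulvec k n G) Z) / 2)"
proof -
  define B where "B = real (n choose w)"
  define V where "V = real (hamming_ball_vol n t)"
  define \<delta> where "\<delta> = tv_uniform k (map_pmf (mulvec k n G) Z)"
  define q where "q = \<bar>1 - 2 * real w / real n\<bar> ^ t"
  have B: "B > 0" and q: "q \<ge> 0" and \<delta>: "\<delta> \<ge> 0"
    using w by (simp_all add: B_def q_def \<delta>_def tv_uniform_nonneg)
  have "(\<Sum>e\<in>hamming_sphere n w. (bias Z (ip n e))\<^sup>2) \<le> (B * (2 * V / 2 ^ k + 2 * \<delta>) + CC * B * q) / 4"
    unfolding B_def V_def \<delta>_def q_def
    using CC abs_walsh_sphere_sum_le_krawtchouk_bound[OF kraw w CC]
    by (intro sum_bias_square_le[OF Z]) simp_all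
  then have mean_square: "(\<Sum>e\<in>hamming_sphere n w. \<bar>bias Z (ip n e)\<bar>\<^sup>2) / B
      \<le> V / 2 ^ (k + 1) + \<delta> / 2 + CC * q / 4"
    using B by (simp add: divide_le_eq field_simps)
  have "(1 / B) * (\<Sum>e\<in>hamming_sphere n w. \<bar>bias Z (ip n e)\<bar>)
      \<le> sqrt ((\<Sum>e\<in>hamming_sphere n w. \<bar>bias Z (ip n e)\<bar>\<^sup>2) / B)"
    using average_abs_le_sqrt_average_square[of "\<lambda>e. bias Z (ip n e)" "hamming_sphere n w"]
    by (simp add: B_def card_hamming_sphere)
  also have "\<dots> \<le> sqrt (V / 2 ^ (k + 1) + \<delta> / 2 + CC * q / 4)"
    using mean_square by (rule real_sqrt_le_mono)
  also have "\<dots> \<le> sqrt (V / 2 ^ (k + 1)) + sqrt (\<delta> / 2) + sqrt (CC * q / 4)"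
    using CC q \<delta> by (intro sqrt_add3_le) (simp_all add: V_def)
  also have "sqrt (V / 2 ^ (k + 1))
      \<le> sqrt (real (card (dual_code n (gen_code k n G))) * V / 2 ^ (n + 1))"
    unfolding V_def by (rule real_sqrt_le_mono[OF ball_vol_div_two_pow_le])
  also have "sqrt (CC * q / 4) = sqrt CC / 2 * sqrt q"
    by (simp add: real_sqrt_mult real_sqrt_divide)
  finally show ?thesis
    by (simp add: B_def V_def \<delta>_def q_def add_ac)
qed

theorem mainTheorem5:
  fixes c CC :: real and n k w :: nat and G :: "nat \<Rightarrow> nat \<Rightarrow> bool"
    and \<epsilon> :: real and Z :: "(nat \<Rightarrow> bool) pmf"
  assumes c: "0 < c" "c < 1" and CC: "CC \<ge> 1"
    and kraw: "\<And>m w' i. m \<ge> 1 \<Longrightarrow> real w' \<le> c * real m \<Longrightarrow> 2 * i \<le> m \<Longrightarrow>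
       \<bar>real_of_int (krawtchouk m w' i)\<bar> \<le> CC * real (m choose w') * (1 - 2 * real w' / real m) ^ i"
    and k: "1 \<le> k" "k \<le> n - 1"
    and G: "rank_k k n G"
    and w: "real w \<le> c * real n"
    and eps: "\<epsilon> > 0"
    and Zsupp: "set_pmf Z \<subseteq> vecs n"
    and TV: "tv_uniform k (map_pmf (mulvec k n G) Z) \<le> \<epsilon>"
  shows "(let Cd = gen_code k n G; dperp = min_dist n (dual_code n Cd);
              t = (dperp - 1) div 2 in
          (1 / real (n choose w)) *
            (\<Sum>e\<in>{e\<in>vecs n. hweight n e = w}. \<bar>bias Z (ip n e)\<bar>)
          \<le> sqrt (real (card (dual_code n Cd)) * real (hamming_ball_vol n t) / 2 ^ (n + 1))
             + sqrt (CC * real n) / 2 * sqrt (\<bar>1 - 2 * real w / real n\<bar> ^ t)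
             + sqrt (\<epsilon> / 2))"
proof -
  define t where "t = (min_dist n (dual_code n (gen_code k n G)) - 1) div 2"
  have n: "n \<ge> 1"
    using k by linarith
  have "real w \<le> real n"
    using w mult_left_le_one_le[of "real n" c] c by linarith
  then have "w \<le> n"
    by simp
  from average_abs_bias_le[OF kraw[OF n w] this _ Zsupp, of k G t] CC
  have avg: "(1 / real (n choose w)) * (\<Sum>e\<in>hamming_sphere n w. \<bar>bias Z (ip n e)\<bar>)
    \<le> sqrt (real (card (dual_code n (gen_code k n G))) * real (hamming_ball_vol n t) / 2 ^ (n + 1))
       + sqrt CC / 2 * sqrt (\<bar>1 - 2 * real w / real n\<bar> ^ t)
       + sqrt (tv_uniform k (map_pmf (mulvec k n G) Z) / 2)"
    by simp
  have "sqrt CC / 2 * sqrt (\<bar>1 - 2 * real w / real n\<bar> ^ t)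
      \<le> sqrt (CC * real n) / 2 * sqrt (\<bar>1 - 2 * real w / real n\<bar> ^ t)"
    using CC n by (intro mult_right_mono divide_right_mono real_sqrt_le_mono) simp_all
  moreover have "sqrt (tv_uniform k (map_pmf (mulvec k n G) Z) / 2) \<le> sqrt (\<epsilon> / 2)"
    using TV by simp
  ultimately show ?thesis
    using avg unfolding Let_def t_def hamming_sphere_def by linarith
qed

end
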